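(* Let $\phi$ be a topological flow on a compact metric space $(M,\mathrm{dist})$ having the oriented shadowing property. If $p\in\mathrm{Sing}(\phi)$ is Lyapunov stable, then $\bigcap_{n\ge1}\Omega^+(p,1/n)=\{p\}$; if $p\in\mathrm{Sing}(\phi)$ is Lyapunov unstable, then $\bigcap_{n\ge1}\Omega^-(p,1/n)=\{p\}$.
   Context: A topological flow is a continuous $\phi:\mathbb{R}\times M\to M$ with $\phi(0,x)=x$, $\phi(s+t,x)=\phi(s,\phi(t,x))$; $\mathrm{Sing}(\phi)$ is its set of fixed points. A singularity $p$ is Lyapunov stable if for every neighborhood $V$ of $p$ there is a neighborhood $U$ of $p$ with $\phi(t,x)\in V$ for all $t\ge0$, $x\in U$; Lyapunov unstable if the same holds for $t\le0$. A $d$-pseudotrajectory is a map $\xi:\mathbb{R}\to M$ with $\mathrm{dist}(\xi(t+s),\phi(s,\xi(t)))<d$ for all $t\in\mathbb{R}$, $s\in[0,1]$; $\mathrm{Ps}(d)$ is the set of them. $\mathrm{Rep}$ is the set of orientation-preserving homeomorphisms of $\mathbb{R}$. $\phi$ has the oriented shadowing property if for every $\varepsilon>0$ there is $d>0$ such that for every $\xi\in\mathrm{Ps}(d)$ there are $x\in M$, $h\in\mathrm{Rep}$ with $\mathrm{dist}(\xi(t),\phi(h(t),x))<\varepsilon$ for all $t$. $B(\varepsilon,p)$ is the open ball. For $p\in M$, $\varepsilon>0$: $\Omega^+(p,\varepsilon)=\{\xi(t): \xi\in\mathrm{Ps}(\varepsilon),\ \xi(0)\in B(\varepsilon,p),\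 t\ge0\}$ and $\Omega^-(p,\varepsilon)=\{\xi(t): \xi\in\mathrm{Ps}(\varepsilon),\ \xi(0)\in B(\varepsilon,p),\ t\le0\}$. *)

theory Defs
  imports "HOL-Analysis.Analysis"
begin

definition is_flow :: "(real \<Rightarrow> 'a::topological_space \<Rightarrow> 'a) \<Rightarrow> bool" where
  "is_flow \<phi> \<longleftrightarrow> continuous_on UNIV (\<lambda>(t, x). \<phi> t x)
     \<and> (\<forall>x. \<phi> 0 x = x) \<and> (\<forall>s t x. \<phi> (s + t) x = \<phi> s (\<phi> t x))"

definition Sing :: "(real \<Rightarrow> 'a \<Rightarrow> 'a) \<Rightarrow> 'a set" where
  "Sing \<phi> = {p. \<forall>t. \<phi> t p = p}"

definition lyapunov_stable :: "(real \<Rightarrow> 'a::topological_space \<Rightarrow> 'a) \<Rightarrow> 'a \<Rightarrow> bool" where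
  "lyapunov_stable \<phi> p \<longleftrightarrow> (\<forall>V. open V \<and> p \<in> V \<longrightarrow>
     (\<exists>U. open U \<and> p \<in> U \<and> (\<forall>t\<ge>0. \<forall>x\<in>U. \<phi> t x \<in> V)))"

definition lyapunov_unstable :: "(real \<Rightarrow> 'a::topological_space \<Rightarrow> 'a) \<Rightarrow> 'a \<Rightarrow> bool" where
  "lyapunov_unstable \<phi> p \<longleftrightarrow> (\<forall>V. open V \<and> p \<in> V \<longrightarrow>
     (\<exists>U. open U \<and> p \<in> U \<and> (\<forall>t\<le>0. \<forall>x\<in>U. \<phi> t x \<in> V)))"

definition pseudo_traj :: "(real \<Rightarrow> 'a::metric_space \<Rightarrow> 'a) \<Rightarrow> real \<Rightarrow> (real \<Rightarrow> 'a) set" where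
  "pseudo_traj \<phi> d = {\<xi>. \<forall>t. \<forall>s\<in>{0..1}. dist (\<xi> (t + s)) (\<phi> s (\<xi> t)) < d}"

definition Rep :: "(real \<Rightarrow> real) set" where
  "Rep = {h. homeomorphism UNIV UNIV h (inv h) \<and> mono h}"

definition oriented_shadowing :: "(real \<Rightarrow> 'a::metric_space \<Rightarrow> 'a) \<Rightarrow> bool" where
  "oriented_shadowing \<phi> \<longleftrightarrow> (\<forall>\<epsilon>>0. \<exists>d>0. \<forall>\<xi>\<in>pseudo_traj \<phi> d.
     \<exists>x h. h \<in> Rep \<and> (\<forall>t. dist (\<xi> t) (\<phi> (h t) x) < \<epsilon>))"

definition Omega_plus :: "(real \<Rightarrow> 'a::metric_space \<Rightarrow> 'a) \<Rightarrow> 'a \<Rightarrow> real \<Rightarrow> 'a set" where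
  "Omega_plus \<phi> p \<epsilon> = {\<xi> t | \<xi> t. \<xi> \<in> pseudo_traj \<phi> \<epsilon> \<and> \<xi> 0 \<in> ball p \<epsilon> \<and> t \<ge> 0}"

definition Omega_minus :: "(real \<Rightarrow> 'a::metric_space \<Rightarrow> 'a) \<Rightarrow> 'a \<Rightarrow> real \<Rightarrow> 'a set" where
  "Omega_minus \<phi> p \<epsilon> = {\<xi> t | \<xi> t. \<xi> \<in> pseudo_traj \<phi> \<epsilon> \<and> \<xi> 0 \<in> ball p \<epsilon> \<and> t \<le> 0}"

end

theory Submission
  imports Defs
begin

text \<open>Let \<open>q \<noteq> p\<close> and \<open>r = dist q p\<close>, and let \<open>p\<close> be Lyapunov stable. Points \<open>\<delta>\<close>-close
  to \<open>p\<close> stay in \<open>ball p (r/2)\<close> for all positive times. A fine pseudotrajectory starting near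
  \<open>p\<close> is shadowed, up to an orientation-preserving reparametrisation \<open>h\<close>, by the orbit of
  some \<open>y\<close> within \<open>\<delta>\<close> of \<open>p\<close>; since \<open>h\<close> is monotone, positive pseudotrajectory times
  correspond to positive orbit times, so the pseudotrajectory never leaves \<open>ball p r\<close> and
  never reaches \<open>q\<close>. The unstable case is the same argument with time reversed.\<close>

definition Omega_on :: "(real \<Rightarrow> 'a::metric_space \<Rightarrow> 'a) \<Rightarrow> real set \<Rightarrow> 'a \<Rightarrow> real \<Rightarrow> 'a set"
  where "Omega_on \<phi> T p \<epsilon> =
    {\<xi> t | \<xi> t. \<xi> \<in> pseudo_traj \<phi> \<epsilon> \<and> \<xi> 0 \<in> ball p \<epsilon> \<and> t \<in> T}"

definition lyapunov_stable_on :: "real set \<Rightarrow> (real \<Rightarrow> 'a::topological_space \<Rightarrow> 'a) \<Rightarrow> 'a \<Rightarrow> bool"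
  where "lyapunov_stable_on T \<phi> p \<longleftrightarrow> (\<forall>V. open V \<and> p \<in> V \<longrightarrow>
    (\<exists>U. open U \<and> p \<in> U \<and> (\<forall>t\<in>T. \<forall>x\<in>U. \<phi> t x \<in> V)))"

definition half_orbit_shadowing :: "real set \<Rightarrow> (real \<Rightarrow> 'a::metric_space \<Rightarrow> 'a) \<Rightarrow> bool"
  where "half_orbit_shadowing T \<phi> \<longleftrightarrow> (\<forall>\<epsilon>>0. \<exists>d>0. \<forall>\<xi>\<in>pseudo_traj \<phi> d.
    \<exists>y. dist (\<xi> 0) y < \<epsilon> \<and> (\<forall>t\<in>T. \<exists>s\<in>T. dist (\<xi> t) (\<phi> s y) < \<epsilon>))"

lemma Omega_plus_eq_Omega_on: "Omega_plus \<phi> p \<epsilon> = Omega_on \<phi> {0..} p \<epsilon>"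
  by (simp add: Omega_plus_def Omega_on_def)

lemma Omega_minus_eq_Omega_on: "Omega_minus \<phi> p \<epsilon> = Omega_on \<phi> {..0} p \<epsilon>"
  by (simp add: Omega_minus_def Omega_on_def)

lemma lyapunov_stable_iff_stable_on: "lyapunov_stable \<phi> p \<longleftrightarrow> lyapunov_stable_on {0..} \<phi> p"
  by (simp add: lyapunov_stable_def lyapunov_stable_on_def atLeast_def)

lemma lyapunov_unstable_iff_stable_on: "lyapunov_unstable \<phi> p \<longleftrightarrow> lyapunov_stable_on {..0} \<phi> p"
  by (simp add: lyapunov_unstable_def lyapunov_stable_on_def atMost_def)

lemma pseudo_traj_mono:
  assumes "\<xi> \<in> pseudo_traj \<phi> a" "a \<le> b"
  shows "\<xi> \<in> pseudo_traj \<phi> b"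
  using assms unfolding pseudo_traj_def by (auto intro: less_le_trans)

lemma Sing_in_Omega_on:
  assumes "p \<in> Sing \<phi>" "0 \<in> T" "\<epsilon> > 0"
  shows "p \<in> Omega_on \<phi> T p \<epsilon>"
proof -
  have "(\<lambda>_. p) \<in> pseudo_traj \<phi> \<epsilon>"
    using assms by (simp add: pseudo_traj_def Sing_def)
  then show ?thesis
    using assms unfolding Omega_on_def by force
qed

lemma oriented_shadowing_imp_half_orbit_shadowing:
  assumes flow: "is_flow \<phi>" and shadowing: "oriented_shadowing \<phi>"
    and reparam_in_T: "\<And>h t. mono h \<Longrightarrow> t \<in> T \<Longrightarrow> h t - h 0 \<in> T"
  shows "half_orbit_shadowing T \<phi>"
  unfolding half_orbit_shadowing_def
proof (intro allI impI)
  fix \<epsilon> :: real assume "\<epsilon> > 0"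
  then obtain d where "d > 0"
    and d: "\<forall>\<xi>\<in>pseudo_traj \<phi> d. \<exists>x h. h \<in> Rep \<and> (\<forall>t. dist (\<xi> t) (\<phi> (h t) x) < \<epsilon>)"
    using shadowing unfolding oriented_shadowing_def by blast
  have "\<exists>y. dist (\<xi> 0) y < \<epsilon> \<and> (\<forall>t\<in>T. \<exists>s\<in>T. dist (\<xi> t) (\<phi> s y) < \<epsilon>)"
    if \<xi>: "\<xi> \<in> pseudo_traj \<phi> d" for \<xi>
  proof -
    obtain x h where "h \<in> Rep" and close: "\<And>t. dist (\<xi> t) (\<phi> (h t) x) < \<epsilon>"
      using bspec[OF d \<xi>] by blast
    then have "mono h"
      by (simp add: Rep_def)
    have orbit: "\<phi> (h t) x = \<phi> (h t - h 0) (\<phi> (h 0) x)" for t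
      using flow diff_add_cancel[of "h t" "h 0"] unfolding is_flow_def by metis
    show ?thesis
    proof (intro exI conjI ballI)
      show "dist (\<xi> 0) (\<phi> (h 0) x) < \<epsilon>"
        using close[of 0] by simp
      show "\<exists>s\<in>T. dist (\<xi> t) (\<phi> s (\<phi> (h 0) x)) < \<epsilon>" if "t \<in> T" for t
        using reparam_in_T[OF \<open>mono h\<close> that] close[of t] orbit[of t] by auto
    qed
  qed
  then show "\<exists>d>0. \<forall>\<xi>\<in>pseudo_traj \<phi> d.
      \<exists>y. dist (\<xi> 0) y < \<epsilon> \<and> (\<forall>t\<in>T. \<exists>s\<in>T. dist (\<xi> t) (\<phi> s y) < \<epsilon>)"
    using \<open>d > 0\<close> by blast
qed

lemma Inter_Omega_on_subset_singleton:
  assumes shadowing: "half_orbit_shadowing T \<phi>" and stable: "lyapunov_stable_on T \<phi> p"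
  shows "(\<Inter>n\<in>{1::nat..}. Omega_on \<phi> T p (1 / real n)) \<subseteq> {p}"
proof
  fix q assume q: "q \<in> (\<Inter>n\<in>{1::nat..}. Omega_on \<phi> T p (1 / real n))"
  show "q \<in> {p}"
  proof (rule ccontr)
    assume "q \<notin> {p}"
    define r where "r = dist q p"
    have "r > 0" using \<open>q \<notin> {p}\<close> by (simp add: r_def)
    obtain U where "open U" "p \<in> U" and U: "\<And>t x. t \<in> T \<Longrightarrow> x \<in> U \<Longrightarrow> \<phi> t x \<in> ball p (r/2)"
      using stable \<open>r > 0\<close> unfolding lyapunov_stable_on_def
      by (meson centre_in_ball half_gt_zero open_ball)
    obtain \<delta> where "\<delta> > 0" "ball p \<delta> \<subseteq> U"
      using \<open>open U\<close> \<open>p \<in> U\<close> openE by blast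
    define \<epsilon> where "\<epsilon> = min (r/2) (\<delta>/2)"
    obtain d where "d > 0" and d: "\<forall>\<xi>\<in>pseudo_traj \<phi> d.
        \<exists>y. dist (\<xi> 0) y < \<epsilon> \<and> (\<forall>t\<in>T. \<exists>s\<in>T. dist (\<xi> t) (\<phi> s y) < \<epsilon>)"
      using shadowing \<open>r > 0\<close> \<open>\<delta> > 0\<close> unfolding half_orbit_shadowing_def \<epsilon>_def
      by (metis half_gt_zero min_less_iff_conj)
    obtain n :: nat where "n > 0" and n: "1 / real n < min d (\<delta>/2)"
      using ex_inverse_of_nat_less[of "min d (\<delta>/2)"] \<open>d > 0\<close> \<open>\<delta> > 0\<close>
      by (auto simp: inverse_eq_divide)
    then have "q \<in> Omega_on \<phi> T p (1 / real n)"
      using q by auto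
    then obtain \<xi> t where "q = \<xi> t" "t \<in> T" "\<xi> \<in> pseudo_traj \<phi> (1 / real n)"
      and start: "dist p (\<xi> 0) < 1 / real n"
      unfolding Omega_on_def by auto
    then have "\<xi> \<in> pseudo_traj \<phi> d"
      using n pseudo_traj_mono by fastforce
    then obtain y s where y: "dist (\<xi> 0) y < \<epsilon>" and "s \<in> T" and ys: "dist q (\<phi> s y) < \<epsilon>"
      using d \<open>q = \<xi> t\<close> \<open>t \<in> T\<close> by blast
    have "dist p y < \<delta>"
      using dist_triangle[of p y "\<xi> 0"] start y n by (simp add: \<epsilon>_def)
    then have "\<phi> s y \<in> ball p (r/2)"
      using U \<open>s \<in> T\<close> \<open>ball p \<delta> \<subseteq> U\<close> by auto
    then have "dist q p < r"
      using dist_triangle[of q p "\<phi> s y"] ys by (simp add: \<epsilon>_def dist_commute)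
    then show False
      by (simp add: r_def)
  qed
qed

lemma Inter_Omega_on_eq_singleton:
  assumes "half_orbit_shadowing T \<phi>" "lyapunov_stable_on T \<phi> p" "p \<in> Sing \<phi>" "0 \<in> T"
  shows "(\<Inter>n\<in>{1::nat..}. Omega_on \<phi> T p (1 / real n)) = {p}"
  using Inter_Omega_on_subset_singleton[OF assms(1,2)] Sing_in_Omega_on[OF assms(3,4)] by force

theorem lemma4p1:
  fixes \<phi> :: "real \<Rightarrow> 'a::metric_space \<Rightarrow> 'a"
  assumes "compact (UNIV :: 'a set)"
    and "is_flow \<phi>"
    and "oriented_shadowing \<phi>"
    and "p \<in> Sing \<phi>"
  shows "(lyapunov_stable \<phi> p \<longrightarrow> (\<Inter>n\<in>{1::nat..}. Omega_plus \<phi> p (1 / real n)) = {p})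
       \<and> (lyapunov_unstable \<phi> p \<longrightarrow> (\<Inter>n\<in>{1::nat..}. Omega_minus \<phi> p (1 / real n)) = {p})"
proof -
  have "half_orbit_shadowing {0..} \<phi>"
    by (rule oriented_shadowing_imp_half_orbit_shadowing[OF assms(2,3)]) (simp add: monoD)
  moreover have "half_orbit_shadowing {..0} \<phi>"
    by (rule oriented_shadowing_imp_half_orbit_shadowing[OF assms(2,3)]) (simp add: monoD)
  ultimately show ?thesis
    using Inter_Omega_on_eq_singleton[of _ \<phi> p] assms(4)
    unfolding Omega_plus_eq_Omega_on Omega_minus_eq_Omega_on
      lyapunov_stable_iff_stable_on lyapunov_unstable_iff_stable_on
    by simp
qed

end
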